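(* Let $k,\lambda,j$ be integers with $k>\lambda>j>1$. If an infinite word avoids $(k,\lambda)$-anti-powers (i.e. has no factor that is a $(k,\lambda)$-anti-power), then it avoids $(k-j,\lambda-j)$-anti-powers.
   Context: A factor is a contiguous subword. A $(k,\lambda)$-anti-power is a word $w=w_1\cdots w_k$ with $|w_1|=\cdots=|w_k|$ (nonempty blocks) such that $|\{i: w_i=w_j\}|\le\lambda$ for each $j\in\{1,\dots,k\}$. *)

theory Defs
  imports Main
begin

definition block :: "'a list \<Rightarrow> nat \<Rightarrow> nat \<Rightarrow> 'a list" where
  "block u m b = take m (drop (b * m) u)"

definition anti_power :: "nat \<Rightarrow> nat \<Rightarrow> 'a list \<Rightarrow> bool" where
  "anti_power k lam u \<longleftrightarrow>
     (\<exists>m>0. length u = k * m \<and>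
        (\<forall>j<k. card {i. i < k \<and> block u m i = block u m j} \<le> lam))"

definition factor :: "(nat \<Rightarrow> 'a) \<Rightarrow> nat \<Rightarrow> nat \<Rightarrow> 'a list" where
  "factor x i n = map x [i..<i+n]"

definition avoids_anti_powers :: "nat \<Rightarrow> nat \<Rightarrow> (nat \<Rightarrow> 'a) \<Rightarrow> bool" where
  "avoids_anti_powers k lam x \<longleftrightarrow> (\<forall>i n. \<not> anti_power k lam (factor x i n))"

end

theory Submission
  imports Defs
begin

text \<open>Append j further blocks of the same length to the (k - j, lam - j)-anti-power: each block
  of the resulting k-block word occurs at most (lam - j) + j = lam times among the blocks, so
  it is a (k, lam)-anti-power and again a factor of the infinite word.\<close>

lemma length_factor [simp]: "length (factor x i n) = n"
  by (simp add: factor_def)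

lemma factor_add: "factor x i (n + n') = factor x i n @ factor x (i + n) n'"
  unfolding factor_def by (metis add.assoc le_add1 map_append upt_add_eq_append)

lemma block_append:
  assumes "length u = k * m" and "b < k"
  shows "block (u @ v) m b = block u m b"
proof -
  have "b * m + m \<le> k * m"
    using assms(2) by (metis Suc_leI add.commute mult_Suc mult_le_mono1)
  then show ?thesis
    using assms(1) by (simp add: block_def)
qed

lemma anti_power_block_count:
  assumes "anti_power k lam u" and "length u = k * m" and "0 < m"
  shows "card {i. i < k \<and> block u m i = w} \<le> lam"
proof (cases "\<exists>t<k. block u m t = w")
  case True
  then obtain t where t: "t < k" "block u m t = w" by blast
  from assms(1) obtain m' where "length u = k * m'"
    and count: "\<forall>t<k. card {i. i < k \<and> block u m' i = block u m' t} \<le> lam"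
    unfolding anti_power_def by blast
  with assms(2) t(1) have "m' = m" by simp
  with count t show ?thesis by blast
next
  case False
  then have "{i. i < k \<and> block u m i = w} = {}" by blast
  then show ?thesis by (simp only: card.empty le0)
qed

lemma anti_power_append:
  assumes "anti_power k lam u" and "length u = k * m" and "length v = j * m" and "0 < m"
  shows "anti_power (k + j) (lam + j) (u @ v)"
  unfolding anti_power_def
proof (intro exI[of _ m] conjI allI impI)
  show "length (u @ v) = (k + j) * m"
    using assms(2,3) by (simp add: algebra_simps)
  fix t
  let ?w = "block (u @ v) m t"
  have "{i. i < k + j \<and> block (u @ v) m i = ?w} \<subseteq> {i. i < k \<and> block u m i = ?w} \<union> {k..<k + j}"
    using block_append[OF assms(2)] by auto
  then have "card {i. i < k + j \<and> block (u @ v) m i = ?w}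
      \<le> card ({i. i < k \<and> block u m i = ?w} \<union> {k..<k + j})"
    by (intro card_mono) auto
  also have "\<dots> \<le> card {i. i < k \<and> block u m i = ?w} + j"
    using card_Un_le[of _ "{k..<k + j}"] by simp
  also have "\<dots> \<le> lam + j"
    using anti_power_block_count[OF assms(1,2,4)] by simp
  finally show "card {i. i < k + j \<and> block (u @ v) m i = ?w} \<le> lam + j" .
qed (use assms(4) in simp)

theorem lemma4p1:
  fixes k lam j :: nat and x :: "nat \<Rightarrow> 'a"
  assumes "k > lam" and "lam > j" and "j > 1"
    and "avoids_anti_powers k lam x"
  shows "avoids_anti_powers (k - j) (lam - j) x"
  unfolding avoids_anti_powers_def
proof (intro allI notI)
  fix i n
  assume anti: "anti_power (k - j) (lam - j) (factor x i n)"
  then obtain m where "0 < m" and n: "n = (k - j) * m"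
    unfolding anti_power_def by auto
  have "anti_power (k - j + j) (lam - j + j) (factor x i n @ factor x (i + n) (j * m))"
    using anti_power_append[OF anti _ _ \<open>0 < m\<close>] n by simp
  then have "anti_power k lam (factor x i (n + j * m))"
    using assms(1,2) by (simp add: factor_add)
  with assms(4) show False
    unfolding avoids_anti_powers_def by blast
qed

end
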